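(* Let $G$ be a finite group. Then the deep commuting graph $\Delta_D(G)$ is complete if and only if $G$ is cyclic.
   Context: For a finite group $G$, let $M(G)$ denote its Schur multiplier. A Schur cover of $G$ is a group $\tilde{G}$ with a central extension $\{e\}\to M(G)\xrightarrow{\iota}\tilde{G}\xrightarrow{\pi}G\to\{e\}$ such that $\iota(M(G))\subseteq Z(\tilde{G})\cap[\tilde{G},\tilde{G}]$ (a stem extension) and $\tilde G$ has the maximal possible order among such stem extensions. The deep commuting graph $\Delta_D(G)$ is the simple graph with vertex set $G$ in which two distinct vertices $x,y$ are adjacent if and only if preimages of $x$ and $y$ under $\pi$ commute in $\tilde{G}$; this does not depend on the choice of Schur cover or of the preimages. *)

theory Defs
  imports "HOL-Algebra.Algebra"
begin

definition group_center :: "('b, 'm) monoid_scheme \<Rightarrow> 'b set" where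
  "group_center H = {z \<in> carrier H. \<forall>h \<in> carrier H. z \<otimes>\<^bsub>H\<^esub> h = h \<otimes>\<^bsub>H\<^esub> z}"

definition stem_extension ::
  "('a, 'm) monoid_scheme \<Rightarrow> ('b, 'n) monoid_scheme \<Rightarrow> ('b \<Rightarrow> 'a) \<Rightarrow> bool" where
  "stem_extension G H f \<longleftrightarrow>
     group H \<and> f \<in> hom H G \<and> f ` carrier H = carrier G \<and>
     kernel H G f \<subseteq> group_center H \<inter> derived H (carrier H)"

text \<open>Competing extensions are taken with carrier in type nat (every finite group has an
  isomorphic copy there, and stem extensions of finite groups are finite; infinite ones
  have card 0 anyway).\<close>
definition schur_cover ::
  "('a, 'm) monoid_scheme \<Rightarrow> ('b, 'n) monoid_scheme \<Rightarrow> ('b \<Rightarrow> 'a) \<Rightarrow> bool" where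
  "schur_cover G H f \<longleftrightarrow>
     stem_extension G H f \<and> finite (carrier H) \<and>
     (\<forall>(H' :: nat monoid) f'. stem_extension G H' f' \<longrightarrow>
        card (carrier H') \<le> card (carrier H))"

definition deep_commuting_adj ::
  "('a, 'm) monoid_scheme \<Rightarrow> ('b, 'n) monoid_scheme \<Rightarrow> ('b \<Rightarrow> 'a) \<Rightarrow> 'a \<Rightarrow> 'a \<Rightarrow> bool" where
  "deep_commuting_adj G H f x y \<longleftrightarrow>
     x \<in> carrier G \<and> y \<in> carrier G \<and> x \<noteq> y \<and>
     (\<forall>a \<in> carrier H. \<forall>b \<in> carrier H. f a = x \<longrightarrow> f b = y \<longrightarrow>
        a \<otimes>\<^bsub>H\<^esub> b = b \<otimes>\<^bsub>H\<^esub> a)"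

definition deep_commuting_graph_complete ::
  "('a, 'm) monoid_scheme \<Rightarrow> ('b, 'n) monoid_scheme \<Rightarrow> ('b \<Rightarrow> 'a) \<Rightarrow> bool" where
  "deep_commuting_graph_complete G H f \<longleftrightarrow>
     (\<forall>x \<in> carrier G. \<forall>y \<in> carrier G. x \<noteq> y \<longrightarrow> deep_commuting_adj G H f x y)"

end

theory Submission
  imports Defs
begin

(*
  The kernel of a Schur cover H of G is central, so two elements of H with the same image in G
  commute; hence the deep commuting graph is complete exactly when H is abelian.
  If G is cyclic, then H/Z(H) is a quotient of G, hence cyclic, and so H is abelian.
  Conversely, if H is abelian then [H, H] = 1, so the kernel, being contained in [H, H], is
  trivial and G is isomorphic to H, hence abelian. A non-cyclic finite abelian group G maps onto
  (Z/q)^2 for some prime q (take N maximal with G/N non-cyclic), via homomorphisms phi and psi;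
  the extension of G by Z/q with the cocycle phi(g) psi(h) is a stem extension of order
  q |G| > |H|, contradicting the maximality of the Schur cover.
*)

section \<open>Central kernels\<close>

lemma group_center_commute:
  "c \<in> group_center H \<Longrightarrow> h \<in> carrier H \<Longrightarrow> c \<otimes>\<^bsub>H\<^esub> h = h \<otimes>\<^bsub>H\<^esub> c"
  by (simp add: group_center_def)

lemma (in group) mult_central_mult:
  assumes "x \<in> carrier G" "y \<in> carrier G" "c \<in> group_center G" "d \<in> carrier G"
  shows "(x \<otimes> c) \<otimes> (y \<otimes> d) = (x \<otimes> y) \<otimes> (c \<otimes> d)"
proof -
  have c: "c \<in> carrier G"
    using assms(3) by (simp add: group_center_def)
  have "(x \<otimes> c) \<otimes> (y \<otimes> d) = x \<otimes> (c \<otimes> y) \<otimes> d"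
    using assms c by (simp add: m_assoc)
  also have "\<dots> = x \<otimes> (y \<otimes> c) \<otimes> d"
    using group_center_commute[OF assms(3,2)] by simp
  also have "\<dots> = (x \<otimes> y) \<otimes> (c \<otimes> d)"
    using assms c by (simp add: m_assoc)
  finally show ?thesis .
qed

lemma (in group) commute_mult_central:
  assumes "x \<in> carrier G" "y \<in> carrier G" "x \<otimes> y = y \<otimes> x"
    and "c \<in> group_center G" "d \<in> group_center G"
  shows "(x \<otimes> c) \<otimes> (y \<otimes> d) = (y \<otimes> d) \<otimes> (x \<otimes> c)"
proof -
  have c: "c \<in> carrier G" and d: "d \<in> carrier G"
    using assms(4,5) by (auto simp: group_center_def)
  have "(x \<otimes> c) \<otimes> (y \<otimes> d) = (y \<otimes> x) \<otimes> (d \<otimes> c)"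
    using mult_central_mult[OF assms(1,2,4) d] assms(3) group_center_commute[OF assms(4) d] by simp
  also have "\<dots> = (y \<otimes> d) \<otimes> (x \<otimes> c)"
    using mult_central_mult[OF assms(2,1,5) c] by simp
  finally show ?thesis .
qed

lemma (in group) comm_group_if_cyclic_mod_center:
  assumes "a \<in> carrier G"
    and "\<And>u. u \<in> carrier G \<Longrightarrow> \<exists>i::int. \<exists>c \<in> group_center G. u = a [^] i \<otimes> c"
  shows "comm_group G"
proof (rule group_comm_groupI)
  fix u v assume "u \<in> carrier G" "v \<in> carrier G"
  then obtain i j :: int and c d where
    "c \<in> group_center G" "u = a [^] i \<otimes> c" "d \<in> group_center G" "v = a [^] j \<otimes> d"
    using assms(2) by meson
  moreover have "a [^] i \<otimes> a [^] j = a [^] j \<otimes> a [^] i"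
    using assms(1) by (simp add: int_pow_mult[symmetric] add.commute)
  ultimately show "u \<otimes> v = v \<otimes> u"
    using assms(1) commute_mult_central[of "a [^] i" "a [^] j" c d] by simp
qed

lemma iso_group_center:
  assumes "group E" and "group E'" and "h \<in> iso E E'" and "c \<in> group_center E"
  shows "h c \<in> group_center E'"
proof -
  interpret h: group_hom E E' h
    using assms(1-3) by (simp add: group_hom_def group_hom_axioms_def iso_def)
  have c: "c \<in> carrier E"
    using assms(4) by (simp add: group_center_def)
  have onto: "h ` carrier E = carrier E'"
    using assms(3) by (simp add: iso_def bij_betw_def)
  have "h c \<otimes>\<^bsub>E'\<^esub> h b = h b \<otimes>\<^bsub>E'\<^esub> h c" if "b \<in> carrier E" for b
    using that c group_center_commute[OF assms(4) that] by (simp flip: h.hom_mult)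
  moreover have "h c \<in> carrier E'"
    using c by simp
  ultimately show ?thesis
    unfolding group_center_def onto[symmetric] by blast
qed

lemma stem_extension_fiber_central:
  assumes "group G" and "stem_extension G H f"
    and "a \<in> carrier H" and "b \<in> carrier H" and "f a = f b"
  shows "inv\<^bsub>H\<^esub> b \<otimes>\<^bsub>H\<^esub> a \<in> group_center H"
proof -
  interpret f: group_hom H G f
    using assms(1,2) by (simp add: stem_extension_def group_hom_def group_hom_axioms_def)
  have "inv\<^bsub>H\<^esub> b \<otimes>\<^bsub>H\<^esub> a \<in> kernel H G f"
    using assms(3-5) by (simp add: kernel_def)
  then show ?thesis
    using assms(2) by (auto simp: stem_extension_def)
qed

lemma deep_commuting_graph_complete_iff_comm_group:
  assumes "group G" and "stem_extension G H f"
  shows "deep_commuting_graph_complete G H f \<longleftrightarrow> comm_group H"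
proof
  interpret H: group H using assms(2) by (simp add: stem_extension_def)
  have f: "f \<in> carrier H \<rightarrow> carrier G"
    using assms(2) by (simp add: stem_extension_def hom_def)
  assume complete: "deep_commuting_graph_complete G H f"
  show "comm_group H"
  proof (rule H.group_comm_groupI)
    fix a b assume a: "a \<in> carrier H" and b: "b \<in> carrier H"
    show "a \<otimes>\<^bsub>H\<^esub> b = b \<otimes>\<^bsub>H\<^esub> a"
    proof (cases "f a = f b")
      case False
      then have "deep_commuting_adj G H f (f a) (f b)"
        using complete a b f unfolding deep_commuting_graph_complete_def by blast
      then show ?thesis
        using a b unfolding deep_commuting_adj_def by blast
    next
      case True
      define c where "c = inv\<^bsub>H\<^esub> b \<otimes>\<^bsub>H\<^esub> a"
      have central: "c \<in> group_center H"
        unfolding c_def using stem_extension_fiber_central[OF assms a b True] .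
      have c: "c \<in> carrier H" and a_eq: "a = b \<otimes>\<^bsub>H\<^esub> c"
        unfolding c_def using a b by (simp_all add: H.m_assoc[symmetric])
      have "a \<otimes>\<^bsub>H\<^esub> b = b \<otimes>\<^bsub>H\<^esub> (c \<otimes>\<^bsub>H\<^esub> b)"
        using a_eq b c by (simp add: H.m_assoc)
      also have "\<dots> = b \<otimes>\<^bsub>H\<^esub> a"
        using a_eq group_center_commute[OF central b] by simp
      finally show ?thesis .
    qed
  qed
next
  assume "comm_group H"
  then interpret H: comm_group H .
  show "deep_commuting_graph_complete G H f"
    unfolding deep_commuting_graph_complete_def deep_commuting_adj_def
    by (auto simp: H.m_comm)
qed

lemma comm_group_if_stem_extension_of_cyclic:
  assumes "group G" and "stem_extension G H f" and "cyclic_group G"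
  shows "comm_group H"
proof -
  interpret G: group G by (fact assms(1))
  interpret f: group_hom H G f
    using assms(1,2) by (simp add: stem_extension_def group_hom_def group_hom_axioms_def)
  have onto: "f ` carrier H = carrier G"
    using assms(2) by (simp add: stem_extension_def)
  obtain g where g: "g \<in> carrier G" and gen: "carrier G = range (\<lambda>i::int. g [^]\<^bsub>G\<^esub> i)"
    using assms(3) G.cyclic_group by blast
  obtain a where a: "a \<in> carrier H" "f a = g"
    using g onto by (metis imageE)
  show ?thesis
  proof (rule f.G.comm_group_if_cyclic_mod_center[OF a(1)])
    fix u assume u: "u \<in> carrier H"
    then have "f u \<in> range (\<lambda>i::int. g [^]\<^bsub>G\<^esub> i)"
      using f.hom_closed[OF u] gen by simp
    then obtain i :: int where "f u = g [^]\<^bsub>G\<^esub> i"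
      by blast
    then have "f (a [^]\<^bsub>H\<^esub> i) = f u"
      using a by (simp add: f.hom_int_pow)
    then have "inv\<^bsub>H\<^esub> (a [^]\<^bsub>H\<^esub> i) \<otimes>\<^bsub>H\<^esub> u \<in> group_center H"
      using stem_extension_fiber_central[OF assms(1,2)] u a by simp
    moreover have "u = a [^]\<^bsub>H\<^esub> i \<otimes>\<^bsub>H\<^esub> (inv\<^bsub>H\<^esub> (a [^]\<^bsub>H\<^esub> i) \<otimes>\<^bsub>H\<^esub> u)"
      using u a by (simp add: f.G.m_assoc[symmetric])
    ultimately show "\<exists>i::int. \<exists>c \<in> group_center H. u = a [^]\<^bsub>H\<^esub> i \<otimes>\<^bsub>H\<^esub> c"
      by blast
  qed
qed

lemma iso_if_stem_extension_comm_group: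
  assumes "group G" and "stem_extension G H f" and "comm_group H"
  shows "f \<in> iso H G"
proof -
  interpret H: comm_group H by (fact assms(3))
  interpret f: group_hom H G f
    using assms(1,2) by (simp add: stem_extension_def group_hom_def group_hom_axioms_def)
  have "kernel H G f \<subseteq> derived H (carrier H)"
    using assms(2) by (simp add: stem_extension_def)
  also have "\<dots> = {\<one>\<^bsub>H\<^esub>}"
    by (simp add: H.derived_eq_singleton)
  finally have "inj_on f (carrier H)"
    using f.inj_iff_trivial_ker f.subgroup_kernel subgroup.one_closed by blast
  then show ?thesis
    using assms(2) by (simp add: iso_def bij_betw_def stem_extension_def)
qed


section \<open>Transfer of stem extensions\<close>

lemma ex_iso_nat_monoid:
  assumes "group E" and "finite (carrier E)"
  shows "\<exists>(E' :: nat monoid) h. group E' \<and> h \<in> iso E E'"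
proof -
  interpret E: group E by (fact assms(1))
  obtain h :: "_ \<Rightarrow> nat" where "bij_betw h (carrier E) {0..<card (carrier E)}"
    using ex_bij_betw_finite_nat[OF assms(2)] by blast
  then have inj: "inj_on h (carrier E)"
    by (simp add: bij_betw_def)
  define k where "k = inv_into (carrier E) h"
  have kh [simp]: "k (h x) = x" if "x \<in> carrier E" for x
    unfolding k_def using inj that by simp
  have hk [simp]: "h (k a) = a" and kE [simp]: "k a \<in> carrier E" if "a \<in> h ` carrier E" for a
    unfolding k_def using that by (auto simp: f_inv_into_f inv_into_into)
  define E' :: "nat monoid" where
    "E' = \<lparr>carrier = h ` carrier E, monoid.mult = (\<lambda>a b. h (k a \<otimes>\<^bsub>E\<^esub> k b)), one = h \<one>\<^bsub>E\<^esub>\<rparr>"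
  have [simp]: "carrier E' = h ` carrier E" "a \<otimes>\<^bsub>E'\<^esub> b = h (k a \<otimes>\<^bsub>E\<^esub> k b)" "\<one>\<^bsub>E'\<^esub> = h \<one>\<^bsub>E\<^esub>"
    for a b
    by (simp_all add: E'_def)
  have "group E'"
  proof (rule groupI)
    fix a assume "a \<in> carrier E'"
    then have "h (inv\<^bsub>E\<^esub> (k a)) \<in> carrier E'" "h (inv\<^bsub>E\<^esub> (k a)) \<otimes>\<^bsub>E'\<^esub> a = \<one>\<^bsub>E'\<^esub>"
      by simp_all
    then show "\<exists>b \<in> carrier E'. b \<otimes>\<^bsub>E'\<^esub> a = \<one>\<^bsub>E'\<^esub>"
      by blast
  qed (auto simp: E.m_assoc)
  moreover have "h \<in> iso E E'"
    using inj by (auto simp: iso_def bij_betw_def intro!: homI)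
  ultimately show ?thesis
    by blast
qed

lemma stem_extension_transfer_iso:
  assumes "group G" and "stem_extension G E \<pi>" and "group E'" and "h \<in> iso E E'"
  shows "stem_extension G E' (\<pi> \<circ> inv_into (carrier E) h)"
proof -
  interpret E: group E using assms(2) by (simp add: stem_extension_def)
  interpret h: group_hom E E' h
    using assms(3,4) by (simp add: group_hom_def group_hom_axioms_def iso_def)
  let ?k = "inv_into (carrier E) h"
  have bij: "bij_betw h (carrier E) (carrier E')"
    using assms(4) by (simp add: iso_def)
  have hk: "h (?k a) = a" and k: "?k a \<in> carrier E" if "a \<in> carrier E'" for a
    using bij that by (auto simp: bij_betw_inv_into_right inv_into_into bij_betw_def)
  have \<pi>: "\<pi> \<in> hom E G" "\<pi> ` carrier E = carrier G"
    and ker: "kernel E G \<pi> \<subseteq> group_center E \<inter> derived E (carrier E)"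
    using assms(2) by (auto simp: stem_extension_def)
  have "\<pi> \<circ> ?k \<in> hom E' G"
    using E.iso_set_sym[OF assms(4)] \<pi>(1) by (auto simp: iso_def intro: hom_compose)
  moreover have "(\<pi> \<circ> ?k) ` carrier E' = carrier G"
    using bij_betw_inv_into[OF bij] \<pi>(2) by (metis bij_betw_imp_surj_on image_comp)
  moreover have "kernel E' G (\<pi> \<circ> ?k) \<subseteq> group_center E' \<inter> derived E' (carrier E')"
  proof
    fix a assume "a \<in> kernel E' G (\<pi> \<circ> ?k)"
    then have a: "a \<in> carrier E'" and "?k a \<in> kernel E G \<pi>"
      by (auto simp: kernel_def k)
    then have "?k a \<in> group_center E" and "?k a \<in> derived E (carrier E)"
      using ker by auto
    moreover have "derived E' (carrier E') = h ` derived E (carrier E)"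
      using h.derived_img[of "carrier E"] bij by (simp add: bij_betw_def)
    ultimately show "a \<in> group_center E' \<inter> derived E' (carrier E')"
      using iso_group_center[OF E.is_group assms(3,4)] hk[OF a] by (metis IntI image_eqI)
  qed
  ultimately show ?thesis
    using assms(3) by (simp add: stem_extension_def)
qed

lemma schur_cover_card_ge:
  assumes "group G" and "schur_cover G H f" and "stem_extension G E \<pi>" and "finite (carrier E)"
  shows "card (carrier E) \<le> card (carrier H)"
proof -
  interpret E: group E using assms(3) by (simp add: stem_extension_def)
  obtain E' :: "nat monoid" and h where E': "group E'" "h \<in> iso E E'"
    using ex_iso_nat_monoid[OF E.is_group assms(4)] by blast
  then have "stem_extension G E' (\<pi> \<circ> inv_into (carrier E) h)"
    using stem_extension_transfer_iso[OF assms(1,3)] by blast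
  then have "card (carrier E') \<le> card (carrier H)"
    using assms(2) unfolding schur_cover_def by blast
  moreover have "card (carrier E') = card (carrier E)"
    using E'(2) by (metis is_isoI iso_same_card)
  ultimately show ?thesis
    by simp
qed

section \<open>Heisenberg extensions\<close>

lemma product_cocycle_mod:
  fixes q :: int
  shows "((a + b + x * y) mod q + c + ((x + x') mod q) * y') mod q
       = (a + (b + c + x' * y') mod q + x * ((y + y') mod q)) mod q"
proof -
  have "((a + b + x * y) mod q + c + ((x + x') mod q) * y') mod q
      = (a + b + x * y + c + (x + x') * y') mod q"
    by (metis mod_add_cong mod_mult_left_eq mod_add_left_eq)
  also have "\<dots> = (a + (b + c + x' * y') + x * (y + y')) mod q"
    by (simp add: algebra_simps)
  also have "\<dots> = (a + (b + c + x' * y') mod q + x * ((y + y') mod q)) mod q"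
    by (metis mod_add_cong mod_mult_right_eq mod_add_right_eq)
  finally show ?thesis .
qed

lemma (in group) hom_integer_mod_group_mult:
  assumes "\<phi> \<in> hom G (integer_mod_group q)" and "g \<in> carrier G" and "h \<in> carrier G"
  shows "\<phi> (g \<otimes> h) = (\<phi> g + \<phi> h) mod int q"
  using assms by (simp add: hom_mult)

lemma (in group) hom_integer_mod_group_one:
  assumes "\<phi> \<in> hom G (integer_mod_group q)"
  shows "\<phi> \<one> = 0"
  using group_hom.hom_one[of G "integer_mod_group q" \<phi>] assms
  by (simp add: group_hom_def group_hom_axioms_def is_group)

text \<open>The central extension of \<open>G\<close> by \<open>\<int>/q\<close> with the bilinear cocycle \<open>(g, h) \<mapsto> \<phi> g \<psi> h\<close>;
  \<open>\<int>/q\<close> is represented by \<open>{0..<q}\<close>, as in \<^const>\<open>integer_mod_group\<close>.\<close>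

definition heisenberg_extension ::
  "('a, 'm) monoid_scheme \<Rightarrow> nat \<Rightarrow> ('a \<Rightarrow> int) \<Rightarrow> ('a \<Rightarrow> int) \<Rightarrow> ('a \<times> int) monoid" where
  "heisenberg_extension G q \<phi> \<psi> =
     \<lparr>carrier = carrier G \<times> {0..<int q},
      monoid.mult = (\<lambda>(g, a) (h, b). (g \<otimes>\<^bsub>G\<^esub> h, (a + b + \<phi> g * \<psi> h) mod int q)),
      one = (\<one>\<^bsub>G\<^esub>, 0)\<rparr>"

lemma carrier_heisenberg_extension [simp]:
  "carrier (heisenberg_extension G q \<phi> \<psi>) = carrier G \<times> {0..<int q}"
  by (simp add: heisenberg_extension_def)

lemma mult_heisenberg_extension [simp]:
  "(g, a) \<otimes>\<^bsub>heisenberg_extension G q \<phi> \<psi>\<^esub> (h, b) = (g \<otimes>\<^bsub>G\<^esub> h, (a + b + \<phi> g * \<psi> h) mod int q)"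
  by (simp add: heisenberg_extension_def)

lemma one_heisenberg_extension [simp]:
  "\<one>\<^bsub>heisenberg_extension G q \<phi> \<psi>\<^esub> = (\<one>\<^bsub>G\<^esub>, 0)"
  by (simp add: heisenberg_extension_def)

lemma card_heisenberg_extension:
  "card (carrier (heisenberg_extension G q \<phi> \<psi>)) = card (carrier G) * q"
  by (simp add: card_cartesian_product)

context group
begin

context
  fixes q :: nat and \<phi> \<psi> :: "'a \<Rightarrow> int"
  assumes q: "q > 0"
    and \<phi>: "\<phi> \<in> hom G (integer_mod_group q)" and \<psi>: "\<psi> \<in> hom G (integer_mod_group q)"
begin

lemma group_heisenberg_extension: "group (heisenberg_extension G q \<phi> \<psi>)"
proof (rule groupI)
  let ?E = "heisenberg_extension G q \<phi> \<psi>"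
  show "\<one>\<^bsub>?E\<^esub> \<in> carrier ?E"
    using q by simp
  fix u v w assume u: "u \<in> carrier ?E" and v: "v \<in> carrier ?E" and w: "w \<in> carrier ?E"
  show "u \<otimes>\<^bsub>?E\<^esub> v \<in> carrier ?E"
    using u v q by auto
  show "u \<otimes>\<^bsub>?E\<^esub> v \<otimes>\<^bsub>?E\<^esub> w = u \<otimes>\<^bsub>?E\<^esub> (v \<otimes>\<^bsub>?E\<^esub> w)"
    using u v w
    by (auto simp: m_assoc hom_integer_mod_group_mult[OF \<phi>] hom_integer_mod_group_mult[OF \<psi>]
        product_cocycle_mod)
  show "\<one>\<^bsub>?E\<^esub> \<otimes>\<^bsub>?E\<^esub> u = u"
    using u by (auto simp: hom_integer_mod_group_one[OF \<phi>])
  obtain g a where ga: "u = (g, a)" "g \<in> carrier G"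
    using u by auto
  let ?c = "(- (a + \<phi> (inv g) * \<psi> g)) mod int q"
  have "(?c + a + \<phi> (inv g) * \<psi> g) mod int q = 0"
    by (simp add: add.assoc mod_add_left_eq)
  then have "(inv g, ?c) \<in> carrier ?E" "(inv g, ?c) \<otimes>\<^bsub>?E\<^esub> u = \<one>\<^bsub>?E\<^esub>"
    using ga q by auto
  then show "\<exists>v \<in> carrier ?E. v \<otimes>\<^bsub>?E\<^esub> u = \<one>\<^bsub>?E\<^esub>"
    by blast
qed

lemma group_center_heisenberg_extension:
  assumes "c \<in> {0..<int q}"
  shows "(\<one>, c) \<in> group_center (heisenberg_extension G q \<phi> \<psi>)"
  using assms q
  by (auto simp: group_center_def hom_integer_mod_group_one[OF \<phi>] hom_integer_mod_group_one[OF \<psi>]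
      add.commute)

lemma pow_heisenberg_extension_one:
  "(\<one>, 1) [^]\<^bsub>heisenberg_extension G q \<phi> \<psi>\<^esub> n = (\<one>, int n mod int q)"
proof (induction n)
  case (Suc n)
  then show ?case
    by (simp add: hom_integer_mod_group_one[OF \<phi>] mod_add_right_eq add.commute)
qed simp

end

lemma commutator_eq:
  assumes "u \<in> carrier G" "v \<in> carrier G" "z \<in> carrier G" "u \<otimes> v = z \<otimes> (v \<otimes> u)"
  shows "u \<otimes> v \<otimes> inv u \<otimes> inv v = z"
proof -
  have "u \<otimes> v \<otimes> inv u \<otimes> inv v = z \<otimes> (v \<otimes> (u \<otimes> inv u) \<otimes> inv v)"
    using assms by (simp add: m_assoc)
  then show ?thesis
    using assms by simp
qed

end

lemma (in comm_group) derived_heisenberg_extension: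
  assumes q: "q > 1"
    and \<phi>: "\<phi> \<in> hom G (integer_mod_group q)" and \<psi>: "\<psi> \<in> hom G (integer_mod_group q)"
    and x: "x \<in> carrier G" "\<phi> x = 1" "\<psi> x = 0"
    and y: "y \<in> carrier G" "\<phi> y = 0" "\<psi> y = 1"
  shows "{\<one>} \<times> {0..<int q} \<subseteq> derived (heisenberg_extension G q \<phi> \<psi>) (carrier G \<times> {0..<int q})"
proof -
  let ?E = "heisenberg_extension G q \<phi> \<psi>"
  have q0: "q > 0"
    using q by simp
  interpret E: group ?E
    by (rule group_heisenberg_extension[OF q0 \<phi> \<psi>])
  let ?u = "(x, 0::int)" and ?v = "(y, 0::int)" and ?z = "(\<one>, 1::int)"
  have uvz: "?u \<in> carrier ?E" "?v \<in> carrier ?E" "?z \<in> carrier ?E"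
    using x y q by auto
  \<comment> \<open>\<open>\<phi> x \<psi> y - \<phi> y \<psi> x = 1\<close>, so the commutator of \<open>u\<close> and \<open>v\<close> generates the kernel\<close>
  have "?u \<otimes>\<^bsub>?E\<^esub> ?v = ?z \<otimes>\<^bsub>?E\<^esub> (?v \<otimes>\<^bsub>?E\<^esub> ?u)"
    using x y q by (simp add: m_comm hom_integer_mod_group_one[OF \<phi>])
  then have "?u \<otimes>\<^bsub>?E\<^esub> ?v \<otimes>\<^bsub>?E\<^esub> inv\<^bsub>?E\<^esub> ?u \<otimes>\<^bsub>?E\<^esub> inv\<^bsub>?E\<^esub> ?v = ?z"
    by (rule E.commutator_eq[OF uvz])
  then have "?z \<in> derived_set ?E (carrier ?E)"
    using uvz by blast
  then have "?z \<in> derived ?E (carrier ?E)"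
    unfolding derived_def by (rule generate.incl)
  then have z_pow: "?z [^]\<^bsub>?E\<^esub> n \<in> derived ?E (carrier ?E)" for n :: nat
    using E.subgroup_int_pow_closed[OF E.derived_is_subgroup[OF subset_refl], of ?z "int n"]
    by (simp add: int_pow_int)
  have "(\<one>, c) \<in> derived ?E (carrier ?E)" if "c \<in> {0..<int q}" for c
    using z_pow[of "nat c"] pow_heisenberg_extension_one[OF q0 \<phi> \<psi>, of "nat c"] that by simp
  then show ?thesis
    by auto
qed

lemma (in comm_group) stem_extension_heisenberg_extension:
  assumes q: "q > 1"
    and \<phi>: "\<phi> \<in> hom G (integer_mod_group q)" and \<psi>: "\<psi> \<in> hom G (integer_mod_group q)"
    and x: "x \<in> carrier G" "\<phi> x = 1" "\<psi> x = 0"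
    and y: "y \<in> carrier G" "\<phi> y = 0" "\<psi> y = 1"
  shows "stem_extension G (heisenberg_extension G q \<phi> \<psi>) fst"
proof -
  let ?E = "heisenberg_extension G q \<phi> \<psi>"
  have q0: "q > 0"
    using q by simp
  have kernel: "kernel ?E G fst = {\<one>} \<times> {0..<int q}"
    by (auto simp: kernel_def)
  have "kernel ?E G fst \<subseteq> group_center ?E"
    unfolding kernel using group_center_heisenberg_extension[OF q0 \<phi> \<psi>] by auto
  moreover have "kernel ?E G fst \<subseteq> derived ?E (carrier ?E)"
    unfolding kernel using derived_heisenberg_extension[OF q \<phi> \<psi> x y] by simp
  moreover have "fst \<in> hom ?E G"
    by (rule homI) auto
  moreover have "fst ` carrier ?E = carrier G"
    using q by (simp add: fst_image_times)
  ultimately show ?thesis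
    unfolding stem_extension_def using group_heisenberg_extension[OF q0 \<phi> \<psi>] by blast
qed

section \<open>Non-cyclic finite abelian groups\<close>

lemma (in group) hom_integer_mod_group_if_additive_mod:
  fixes R :: "'a \<Rightarrow> int \<Rightarrow> bool" and q :: nat
  assumes q: "q > 0"
    and ex: "\<And>g. g \<in> carrier G \<Longrightarrow> \<exists>i. R g i"
    and unique: "\<And>g i i'. R g i \<Longrightarrow> R g i' \<Longrightarrow> int q dvd i - i'"
    and add: "\<And>g h i j. R g i \<Longrightarrow> R h j \<Longrightarrow> R (g \<otimes> h) (i + j)"
  shows "\<exists>\<phi> \<in> hom G (integer_mod_group q). \<forall>g i. R g i \<longrightarrow> \<phi> g = i mod int q"
proof
  define e where "e g = (SOME i. R g i)" for g
  have R_e: "R g (e g)" if "g \<in> carrier G" for g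
    unfolding e_def using ex[OF that] by (rule someI_ex)
  show "\<forall>g i. R g i \<longrightarrow> e g mod int q = i mod int q"
    using unique ex e_def by (metis someI mod_eq_dvd_iff)
  show "(\<lambda>g. e g mod int q) \<in> hom G (integer_mod_group q)"
  proof (rule homI)
    fix g assume "g \<in> carrier G"
    show "e g mod int q \<in> carrier (integer_mod_group q)"
      using q by (simp add: carrier_integer_mod_group)
  next
    fix g h assume g: "g \<in> carrier G" and h: "h \<in> carrier G"
    have "e (g \<otimes> h) mod int q = (e g + e h) mod int q"
      using unique[OF R_e[of "g \<otimes> h"] add[OF R_e[OF g] R_e[OF h]]] g h by (simp add: mod_eq_dvd_iff)
    then show "e (g \<otimes> h) mod int q = (e g mod int q) \<otimes>\<^bsub>integer_mod_group q\<^esub> (e h mod int q)"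
      by (simp add: mod_simps)
  qed
qed

lemma (in comm_group) mult_inv_eq_if_mult_eq:
  assumes "x \<in> carrier G" "x' \<in> carrier G" "n \<in> carrier G" "n' \<in> carrier G"
    and "x \<otimes> n = x' \<otimes> n'"
  shows "x \<otimes> inv x' = n' \<otimes> inv n"
proof -
  have "x \<otimes> inv x' = ((x \<otimes> n) \<otimes> inv n) \<otimes> inv x'"
    using assms(1-4) by (simp add: m_assoc)
  also have "\<dots> = ((x' \<otimes> n') \<otimes> inv n) \<otimes> inv x'"
    using assms(5) by simp
  also have "\<dots> = (x' \<otimes> (n' \<otimes> inv n)) \<otimes> inv x'"
    using assms(1-4) by (simp add: m_assoc)
  also have "\<dots> = (n' \<otimes> inv n) \<otimes> (x' \<otimes> inv x')"
    using assms(1-4) by (simp add: m_comm[of x'] m_assoc)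
  finally show ?thesis
    using assms(1-4) by simp
qed

lemma (in group) mem_subgroup_if_coprime_int_pows:
  fixes i j :: int
  assumes "subgroup K G" and "z \<in> carrier G"
    and "z [^] i \<in> K" and "z [^] j \<in> K" and "coprime i j"
  shows "z \<in> K"
proof -
  obtain u v where "u * i + v * j = 1"
    using bezout_int[of i j] assms(5) by (auto simp: coprime_iff_gcd_eq_1)
  then have "z = (z [^] i) [^] u \<otimes> (z [^] j) [^] v"
    using assms(2) by (metis int_pow_1 int_pow_mult int_pow_pow mult.commute)
  moreover have "(z [^] i) [^] u \<otimes> (z [^] j) [^] v \<in> K"
    using assms(1,3,4) by (simp add: subgroup.m_closed subgroup_int_pow_closed)
  ultimately show ?thesis
    by simp
qed

lemma (in group) ex_prime_pow_mem_subgroup: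
  fixes k :: nat
  assumes N: "subgroup N G" and w: "w \<in> carrier G" "w \<notin> N"
  shows "w [^] k \<in> N \<Longrightarrow> 0 < k \<Longrightarrow> \<exists>z \<in> carrier G. \<exists>q::nat. Factorial_Ring.prime q \<and> z \<notin> N \<and> z [^] q \<in> N"
proof (induction k rule: less_induct)
  case (less k)
  have "k \<noteq> 1"
    using less.prems w by auto
  then obtain q where q: "Factorial_Ring.prime q" "q dvd k"
    using prime_factor_nat by blast
  then obtain r where r: "k = q * r"
    by blast
  have "0 < r" "r < k"
    using r less.prems(2) prime_gt_1_nat[OF q(1)] by auto
  show ?case
  proof (cases "w [^] r \<in> N")
    case True
    then show ?thesis
      using less.IH[OF \<open>r < k\<close>] \<open>0 < r\<close> by blast
  next
    case False
    moreover have "(w [^] r) [^] q \<in> N"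
      using less.prems(1) w r by (simp add: nat_pow_pow mult.commute)
    ultimately show ?thesis
      using q(1) w by blast
  qed
qed

text \<open>Quotient groups are avoided: \<open>powers_mult G b N\<close> is the subgroup \<open>\<langle>b\<rangle>N\<close>, and
  \<open>cyclic_modulo G N\<close> says that \<open>G/N\<close> is cyclic.\<close>

definition powers_mult :: "('a, 'm) monoid_scheme \<Rightarrow> 'a \<Rightarrow> 'a set \<Rightarrow> 'a set" where
  "powers_mult G b N = {b [^]\<^bsub>G\<^esub> (i::int) \<otimes>\<^bsub>G\<^esub> n | i n. n \<in> N}"

definition cyclic_modulo :: "('a, 'm) monoid_scheme \<Rightarrow> 'a set \<Rightarrow> bool" where
  "cyclic_modulo G N \<longleftrightarrow> (\<exists>b \<in> carrier G. carrier G \<subseteq> powers_mult G b N)"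

lemma (in group) powers_mult_subset_subgroup:
  assumes "subgroup K G" and "b \<in> K" and "N \<subseteq> K"
  shows "powers_mult G b N \<subseteq> K"
  using assms by (auto simp: powers_mult_def subgroup_int_pow_closed subgroup.m_closed)

lemma (in group) subset_powers_mult:
  assumes "subgroup N G" and "b \<in> carrier G"
  shows "N \<subseteq> powers_mult G b N" and "b \<in> powers_mult G b N"
proof -
  show "N \<subseteq> powers_mult G b N"
  proof
    fix n assume "n \<in> N"
    then have "n = b [^] (0::int) \<otimes> n" "n \<in> N"
      using subgroup.mem_carrier[OF assms(1)] by simp_all
    then show "n \<in> powers_mult G b N"
      unfolding powers_mult_def by blast
  qed
  have "b = b [^] (1::int) \<otimes> \<one>"
    using assms(2) by simp
  then show "b \<in> powers_mult G b N"
    unfolding powers_mult_def using subgroup.one_closed[OF assms(1)] by blast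
qed

lemma (in comm_group) subgroup_powers_mult:
  assumes N: "subgroup N G" and b: "b \<in> carrier G"
  shows "subgroup (powers_mult G b N) G"
proof (rule subgroupI)
  show "powers_mult G b N \<subseteq> carrier G"
    using subgroup.subset[OF N] b by (auto simp: powers_mult_def)
  show "powers_mult G b N \<noteq> {}"
    using subset_powers_mult(2)[OF N b] by blast
next
  fix x assume "x \<in> powers_mult G b N"
  then obtain i n where "n \<in> N" "x = b [^] (i::int) \<otimes> n"
    by (auto simp: powers_mult_def)
  moreover have "inv (b [^] i \<otimes> n) = b [^] (- i) \<otimes> inv n" if "n \<in> N"
    using that subgroup.subset[OF N] b by (auto simp: inv_mult int_pow_neg)
  ultimately show "inv x \<in> powers_mult G b N"
    unfolding powers_mult_def using subgroup.m_inv_closed[OF N] by blast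
next
  fix x y assume "x \<in> powers_mult G b N" "y \<in> powers_mult G b N"
  then obtain i j n n' where "n \<in> N" "x = b [^] (i::int) \<otimes> n" "n' \<in> N" "y = b [^] (j::int) \<otimes> n'"
    by (auto simp: powers_mult_def)
  moreover have "(b [^] i \<otimes> n) \<otimes> (b [^] j \<otimes> n') = b [^] (i + j) \<otimes> (n \<otimes> n')"
    if "n \<in> N" "n' \<in> N"
    using that subgroup.mem_carrier[OF N] b by (simp add: int_pow_mult m_ac)
  ultimately show "x \<otimes> y \<in> powers_mult G b N"
    unfolding powers_mult_def using subgroup.m_closed[OF N] by blast
qed

lemma (in group) cyclic_group_if_cyclic_modulo_trivial:
  assumes "cyclic_modulo G {\<one>}"
  shows "cyclic_group G"
proof -
  obtain b where b: "b \<in> carrier G" and "carrier G \<subseteq> powers_mult G b {\<one>}"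
    using assms by (auto simp: cyclic_modulo_def)
  then have "carrier G = range (\<lambda>i::int. b [^] i)"
    by (auto simp: powers_mult_def)
  then show ?thesis
    using b cyclic_group by blast
qed

lemma (in group) ex_maximal_not_cyclic_modulo:
  assumes "finite (carrier G)" and "\<not> cyclic_group G"
  shows "\<exists>N. subgroup N G \<and> \<not> cyclic_modulo G N \<and>
    (\<forall>N'. subgroup N' G \<longrightarrow> N \<subset> N' \<longrightarrow> cyclic_modulo G N')"
proof -
  let ?P = "\<lambda>N. subgroup N G \<and> \<not> cyclic_modulo G N"
  have "?P {\<one>}"
    using assms(2) triv_subgroup cyclic_group_if_cyclic_modulo_trivial by blast
  moreover have "card N < Suc (card (carrier G))" if "?P N" for N
    using that assms(1) by (simp add: le_imp_less_Suc card_mono subgroup.subset)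
  ultimately obtain N where N: "?P N" and max: "\<And>N'. ?P N' \<Longrightarrow> card N' \<le> card N"
    using ex_has_greatest_nat[of ?P "{\<one>}" card] by blast
  have "cyclic_modulo G N'" if "subgroup N' G" "N \<subset> N'" for N'
  proof -
    have "card N < card N'"
      using that assms(1) by (meson psubset_card_mono rev_finite_subset subgroup.subset)
    then show ?thesis
      using max that(1) by fastforce
  qed
  then show ?thesis
    using N by blast
qed

locale noncyclic_mod_two_generators = comm_group +
  fixes N :: "'a set" and a z :: 'a and q :: nat
  assumes subgroup_N: "subgroup N G"
    and a_closed: "a \<in> carrier G" and z_closed: "z \<in> carrier G"
    and prime_q: "Factorial_Ring.prime q" and pow_z_q: "z [^] q \<in> N"
    and not_cyclic_modulo: "\<not> cyclic_modulo G N"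
    and generated: "carrier G \<subseteq> powers_mult G a (powers_mult G z N)"
begin

lemma not_mem_powers_mult:
  assumes b: "b \<in> carrier G" and "a \<in> powers_mult G b N"
  shows "z \<notin> powers_mult G b N"
proof
  assume "z \<in> powers_mult G b N"
  then have "powers_mult G a (powers_mult G z N) \<subseteq> powers_mult G b N"
    using assms subgroup_powers_mult[OF subgroup_N b] subset_powers_mult(1)[OF subgroup_N b]
    by (meson powers_mult_subset_subgroup)
  then show False
    using not_cyclic_modulo generated b by (auto simp: cyclic_modulo_def)
qed

lemma pow_z_int_q: "z [^] int q \<in> N"
  using pow_z_q by (simp add: int_pow_int)

lemma coprime_q_if_not_dvd:
  fixes i :: int
  shows "\<not> int q dvd i \<Longrightarrow> coprime i (int q)"
  using prime_q by (metis prime_imp_coprime coprime_commute prime_nat_int_transfer)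

lemma dvd_if_pow_z_mem:
  fixes j :: int
  assumes "z [^] j \<in> powers_mult G a N"
  shows "int q dvd j"
proof (rule ccontr)
  assume "\<not> int q dvd j"
  let ?K = "powers_mult G a N"
  have K: "subgroup ?K G" and "N \<subseteq> ?K" and "a \<in> ?K"
    using subgroup_powers_mult[OF subgroup_N a_closed] subset_powers_mult[OF subgroup_N a_closed]
    by auto
  then have "z \<in> ?K"
    using mem_subgroup_if_coprime_int_pows[OF K z_closed assms _ coprime_q_if_not_dvd]
      pow_z_int_q \<open>\<not> int q dvd j\<close> by blast
  then show False
    using not_mem_powers_mult[OF a_closed \<open>a \<in> ?K\<close>] by blast
qed

lemma dvd_if_pow_a_mem:
  fixes i :: int
  assumes "a [^] i \<in> N"
  shows "int q dvd i"
proof (rule ccontr)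
  assume "\<not> int q dvd i"
  \<comment> \<open>then \<open>a z\<close> generates \<open>G/N\<close>\<close>
  define b where "b = a \<otimes> z"
  have b: "b \<in> carrier G"
    using a_closed z_closed by (simp add: b_def)
  let ?K = "powers_mult G b N"
  have K: "subgroup ?K G" and "N \<subseteq> ?K" and "b \<in> ?K"
    using subgroup_powers_mult[OF subgroup_N b] subset_powers_mult[OF subgroup_N b] by auto
  have "inv (a [^] i) \<otimes> b [^] i \<in> ?K"
    using K \<open>b \<in> ?K\<close> assms \<open>N \<subseteq> ?K\<close>
    by (meson subgroup.m_closed subgroup.m_inv_closed subgroup_int_pow_closed subsetD)
  moreover have "inv (a [^] i) \<otimes> b [^] i = z [^] i"
    using a_closed z_closed by (simp add: b_def int_pow_distrib m_assoc[symmetric])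
  ultimately have "z \<in> ?K"
    using mem_subgroup_if_coprime_int_pows[OF K z_closed _ _ coprime_q_if_not_dvd]
      pow_z_int_q \<open>N \<subseteq> ?K\<close> \<open>\<not> int q dvd i\<close> by auto
  moreover have "b \<otimes> inv z = a"
    using a_closed z_closed by (simp add: b_def m_assoc)
  ultimately have "a \<in> ?K"
    using K \<open>b \<in> ?K\<close> by (metis subgroup.m_closed subgroup.m_inv_closed)
  then show False
    using not_mem_powers_mult[OF b] \<open>z \<in> ?K\<close> by blast
qed

lemma dvd_if_mult_pow_mem:
  fixes i j :: int
  assumes "a [^] i \<otimes> z [^] j \<in> N"
  shows "int q dvd i \<and> int q dvd j"
proof
  let ?K = "powers_mult G a N"
  have K: "subgroup ?K G" and "N \<subseteq> ?K" and "a \<in> ?K"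
    using subgroup_powers_mult[OF subgroup_N a_closed] subset_powers_mult[OF subgroup_N a_closed]
    by auto
  then have "inv (a [^] i) \<otimes> (a [^] i \<otimes> z [^] j) \<in> ?K"
    using assms by (meson subgroup.m_closed subgroup.m_inv_closed subgroup_int_pow_closed subsetD)
  moreover have "inv (a [^] i) \<otimes> (a [^] i \<otimes> z [^] j) = z [^] j"
    using a_closed z_closed by (simp add: m_assoc[symmetric])
  ultimately show "int q dvd j"
    using dvd_if_pow_z_mem by simp
  then obtain t where "j = int q * t"
    by blast
  then have "z [^] j \<in> N"
    using subgroup_N pow_z_int_q z_closed by (simp add: int_pow_pow[symmetric] subgroup_int_pow_closed)
  then have "(a [^] i \<otimes> z [^] j) \<otimes> inv (z [^] j) \<in> N"
    using subgroup_N assms by (simp add: subgroup.m_closed subgroup.m_inv_closed)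
  moreover have "(a [^] i \<otimes> z [^] j) \<otimes> inv (z [^] j) = a [^] i"
    using a_closed z_closed by (simp add: m_assoc)
  ultimately show "int q dvd i"
    using dvd_if_pow_a_mem by simp
qed

definition has_exponents :: "'a \<Rightarrow> int \<Rightarrow> int \<Rightarrow> bool" where
  "has_exponents g i j \<longleftrightarrow> (\<exists>n \<in> N. g = a [^] i \<otimes> z [^] j \<otimes> n)"

lemma has_exponents_ex:
  assumes "g \<in> carrier G"
  shows "\<exists>i j. has_exponents g i j"
  using generated assms a_closed z_closed subgroup.mem_carrier[OF subgroup_N]
  by (fastforce simp: has_exponents_def powers_mult_def m_assoc)

lemma has_exponents_generators: "has_exponents a 1 0" "has_exponents z 0 1"
  unfolding has_exponents_def using a_closed z_closed subgroup.one_closed[OF subgroup_N] by force+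

lemma has_exponents_mult:
  assumes "has_exponents g i j" and "has_exponents h i' j'"
  shows "has_exponents (g \<otimes> h) (i + i') (j + j')"
proof -
  obtain n n' where n: "n \<in> N" "n' \<in> N"
    and gh: "g = a [^] i \<otimes> z [^] j \<otimes> n" "h = a [^] i' \<otimes> z [^] j' \<otimes> n'"
    using assms by (auto simp: has_exponents_def)
  then have "g \<otimes> h = a [^] (i + i') \<otimes> z [^] (j + j') \<otimes> (n \<otimes> n')"
    using a_closed z_closed subgroup.mem_carrier[OF subgroup_N] by (simp add: int_pow_mult m_ac)
  then show ?thesis
    unfolding has_exponents_def using n subgroup.m_closed[OF subgroup_N] by blast
qed

lemma has_exponents_dvd:
  assumes "has_exponents g i j" and "has_exponents g i' j'"
  shows "int q dvd i - i' \<and> int q dvd j - j'"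
proof (rule dvd_if_mult_pow_mem)
  obtain n n' where n: "n \<in> N" "n' \<in> N"
    and g: "g = a [^] i \<otimes> z [^] j \<otimes> n" "g = a [^] i' \<otimes> z [^] j' \<otimes> n'"
    using assms by (auto simp: has_exponents_def)
  have "a [^] (i - i') \<otimes> z [^] (j - j') = (a [^] i \<otimes> z [^] j) \<otimes> inv (a [^] i' \<otimes> z [^] j')"
    using a_closed z_closed by (simp add: int_pow_diff inv_mult m_ac)
  also have "\<dots> = n' \<otimes> inv n"
    using g a_closed z_closed n subgroup.mem_carrier[OF subgroup_N]
    by (intro mult_inv_eq_if_mult_eq) auto
  finally show "a [^] (i - i') \<otimes> z [^] (j - j') \<in> N"
    using n subgroup_N by (simp add: subgroup.m_closed subgroup.m_inv_closed)
qed

lemma ex_hom_integer_mod_group_pair: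
  "\<exists>\<phi> \<psi>. \<phi> \<in> hom G (integer_mod_group q) \<and> \<psi> \<in> hom G (integer_mod_group q) \<and>
    \<phi> a = 1 \<and> \<psi> a = 0 \<and> \<phi> z = 0 \<and> \<psi> z = 1"
proof -
  have q: "q > 1"
    using prime_q by (rule prime_gt_1_nat)
  have "\<exists>\<phi> \<in> hom G (integer_mod_group q). \<forall>g i. (\<exists>j. has_exponents g i j) \<longrightarrow> \<phi> g = i mod int q"
  proof (rule hom_integer_mod_group_if_additive_mod)
    show "\<exists>i j. has_exponents g i j" if "g \<in> carrier G" for g
      using has_exponents_ex[OF that] .
    show "int q dvd i - i'" if "\<exists>j. has_exponents g i j" "\<exists>j. has_exponents g i' j" for g i i'
      using that has_exponents_dvd by blast
    show "\<exists>j. has_exponents (g \<otimes> h) (i + i') j"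
      if "\<exists>j. has_exponents g i j" "\<exists>j. has_exponents h i' j" for g h i i'
      using that has_exponents_mult by blast
  qed (use q in simp)
  then obtain \<phi> where \<phi>: "\<phi> \<in> hom G (integer_mod_group q)"
    "\<And>g i j. has_exponents g i j \<Longrightarrow> \<phi> g = i mod int q"
    by blast
  have "\<exists>\<psi> \<in> hom G (integer_mod_group q). \<forall>g j. (\<exists>i. has_exponents g i j) \<longrightarrow> \<psi> g = j mod int q"
  proof (rule hom_integer_mod_group_if_additive_mod)
    show "\<exists>j i. has_exponents g i j" if "g \<in> carrier G" for g
      using has_exponents_ex[OF that] by blast
    show "int q dvd j - j'" if "\<exists>i. has_exponents g i j" "\<exists>i. has_exponents g i j'" for g j j'
      using that has_exponents_dvd by blast
    show "\<exists>i. has_exponents (g \<otimes> h) i (j + j')"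
      if "\<exists>i. has_exponents g i j" "\<exists>i. has_exponents h i j'" for g h j j'
      using that has_exponents_mult by blast
  qed (use q in simp)
  then obtain \<psi> where \<psi>: "\<psi> \<in> hom G (integer_mod_group q)"
    "\<And>g i j. has_exponents g i j \<Longrightarrow> \<psi> g = j mod int q"
    by blast
  have "\<phi> a = 1" "\<psi> a = 0" "\<phi> z = 0" "\<psi> z = 1"
    using \<phi>(2) \<psi>(2) has_exponents_generators q by simp_all
  then show ?thesis
    using \<phi>(1) \<psi>(1) by blast
qed

end

lemma (in comm_group) ex_hom_integer_mod_group_pair_if_not_cyclic:
  assumes fin: "finite (carrier G)" and not_cyclic: "\<not> cyclic_group G"
  shows "\<exists>q \<phi> \<psi> x y. q > 1 \<and>
    \<phi> \<in> hom G (integer_mod_group q) \<and> \<psi> \<in> hom G (integer_mod_group q) \<and>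
    x \<in> carrier G \<and> y \<in> carrier G \<and> \<phi> x = 1 \<and> \<psi> x = 0 \<and> \<phi> y = 0 \<and> \<psi> y = 1"
proof -
  obtain N where N: "subgroup N G" and not_cyclic_N: "\<not> cyclic_modulo G N"
    and max: "\<And>N'. subgroup N' G \<Longrightarrow> N \<subset> N' \<Longrightarrow> cyclic_modulo G N'"
    using ex_maximal_not_cyclic_modulo[OF fin not_cyclic] by blast
  have "\<not> carrier G \<subseteq> N"
  proof
    assume "carrier G \<subseteq> N"
    then have "carrier G \<subseteq> powers_mult G \<one> N"
      using subset_powers_mult(1)[OF N one_closed] by blast
    then show False
      using not_cyclic_N one_closed unfolding cyclic_modulo_def by blast
  qed
  then obtain w where w: "w \<in> carrier G" "w \<notin> N"
    by blast
  have "w [^] order G \<in> N" "0 < order G"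
    using w(1) fin N by (simp_all add: pow_order_eq_1 subgroup.one_closed order_gt_0_iff_finite)
  then obtain z and q :: nat where z: "z \<in> carrier G" "z \<notin> N"
    and q: "Factorial_Ring.prime q" "z [^] q \<in> N"
    using ex_prime_pow_mem_subgroup[OF N w] by blast
  have "N \<subset> powers_mult G z N"
    using subset_powers_mult[OF N z(1)] z(2) by blast
  then have "cyclic_modulo G (powers_mult G z N)"
    by (rule max[OF subgroup_powers_mult[OF N z(1)]])
  then obtain a where a: "a \<in> carrier G" and gen: "carrier G \<subseteq> powers_mult G a (powers_mult G z N)"
    unfolding cyclic_modulo_def by blast
  interpret noncyclic_mod_two_generators G N a z q
    by (intro noncyclic_mod_two_generators.intro comm_group_axioms
        noncyclic_mod_two_generators_axioms.intro N a z(1) q not_cyclic_N gen)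
  show ?thesis
    using ex_hom_integer_mod_group_pair a z(1) prime_gt_1_nat[OF q(1)] by blast
qed

lemma (in comm_group) ex_larger_stem_extension_if_not_cyclic:
  assumes "finite (carrier G)" and "\<not> cyclic_group G"
  shows "\<exists>(E :: ('a \<times> int) monoid) \<pi>. stem_extension G E \<pi> \<and> finite (carrier E) \<and>
    card (carrier G) < card (carrier E)"
proof -
  obtain q \<phi> \<psi> x y where q: "q > 1"
    and hom: "\<phi> \<in> hom G (integer_mod_group q)" "\<psi> \<in> hom G (integer_mod_group q)"
    and xy: "x \<in> carrier G" "y \<in> carrier G" "\<phi> x = 1" "\<psi> x = 0" "\<phi> y = 0" "\<psi> y = 1"
    using ex_hom_integer_mod_group_pair_if_not_cyclic[OF assms] by blast
  let ?E = "heisenberg_extension G q \<phi> \<psi>"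
  have "stem_extension G ?E fst"
    using stem_extension_heisenberg_extension[OF q hom xy(1,3,4) xy(2,5,6)] .
  moreover have "finite (carrier ?E)"
    using assms(1) by simp
  moreover have "card (carrier G) < card (carrier ?E)"
    using q assms(1) one_closed by (auto simp: card_heisenberg_extension card_gt_0_iff)
  ultimately show ?thesis
    by blast
qed

lemma cyclic_if_schur_cover_comm_group:
  assumes "group G" and "finite (carrier G)" and "schur_cover G H f" and "comm_group H"
  shows "cyclic_group G"
proof (rule ccontr)
  assume "\<not> cyclic_group G"
  have iso: "f \<in> iso H G"
    using assms iso_if_stem_extension_comm_group by (auto simp: schur_cover_def)
  then have "comm_group G"
    using comm_group.iso_imp_comm_group[OF assms(4) is_isoI group.is_monoid[OF assms(1)]] by blast
  then obtain E :: "('a \<times> int) monoid" and \<pi> where E: "stem_extension G E \<pi>" "finite (carrier E)"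
    and larger: "card (carrier G) < card (carrier E)"
    using comm_group.ex_larger_stem_extension_if_not_cyclic assms(2) \<open>\<not> cyclic_group G\<close> by blast
  have "card (carrier E) \<le> card (carrier H)"
    by (rule schur_cover_card_ge[OF assms(1,3) E])
  also have "\<dots> = card (carrier G)"
    using iso by (simp add: is_isoI iso_same_card)
  finally show False
    using larger by simp
qed

theorem theorem3p3:
  fixes G :: "'a monoid" and H :: "'b monoid" and f :: "'b \<Rightarrow> 'a"
  assumes "group G" and "finite (carrier G)" and "schur_cover G H f"
  shows "deep_commuting_graph_complete G H f \<longleftrightarrow> cyclic_group G"
proof -
  have stem: "stem_extension G H f"
    using assms(3) by (simp add: schur_cover_def)
  have "deep_commuting_graph_complete G H f \<longleftrightarrow> comm_group H"
    by (rule deep_commuting_graph_complete_iff_comm_group[OF assms(1) stem])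
  also have "\<dots> \<longleftrightarrow> cyclic_group G"
    using cyclic_if_schur_cover_comm_group[OF assms] comm_group_if_stem_extension_of_cyclic[OF assms(1) stem]
    by blast
  finally show ?thesis .
qed

end
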